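(* Let $nw=(a_1\cdots a_n,\nu)\in\mathrm{NW}(\Delta)$, with $\Phi_\circ(nw)=([n],\lambda,\le_1^\circ,\le_2^\circ)$ and $\Phi_\bullet(nw)=([n],\lambda,\le_1^\bullet,\le_2^\bullet)$, and let $1\le i<j\le n$. Then the following are equivalent: (i) $j\le_2^\circ i$; (ii) $i\le_2^\bullet j$; (iii) there exists $(k,\ell)\in\nu$ with $1\le k\le i<j\le\ell\le n$ such that $k$ has odd nesting depth and there is no $(k',\ell')\in\nu$ with $k<k'\le i<j\le\ell'<\ell$.
   Context: Nested words: $\Delta$ finite alphabet. A nesting relation of width $n$ is a relation $\nu$ on $[n]=\{1..n\}$ with: $\nu(i,j)\Rightarrow i<j$; $\nu(i,j),\nu(i,j')\Rightarrow j=j'$ and $\nu(i,j),\nu(i',j)\Rightarrow i=i'$; $\nu(i,j),\nu(i',j'),i<i'\Rightarrow j<i'$ or $j'<j$. A nested word is $(w,\nu)$ with $w=a_1\cdots a_n\in\Delta^+$ and $\nu$ a nesting relation of width $n$; $\mathrm{NW}(\Delta)$ is their set. If $\nu(i,j)$, $i$ is a call and $j$ a return position. The factor $nw[i,j]$ ($i\le j$) is $(a_i\cdots a_j,\{(k-i+1,\ell-i+1):(k,\ell)\in\nu,\ i\le k,\ell\le j\})$. The nesting depth of a call position $k$ is the number of pairs $(k',\ell')\in\nu$ with $k'\le k\le\ell'$ (the number of calls open at $k$, including $k$ itself). Texts: a text over $\Delta$ is $(V,\lambda,\le_1,\le_2)$ with $V$ finite nonempty, $\lambda:V\to\Delta$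 and $\le_1,\le_2$ linear orders on $V$, considered up to isomorphism. For texts on disjoint domains $V,V'$: $\tau\circ\tau'=(V\cup V',\lambda\cup\lambda',\le_1\cup\le_1'\cup V\times V',\le_2\cup\le_2'\cup V\times V')$ and $\tau\bullet\tau'=(V\cup V',\lambda\cup\lambda',\le_1\cup\le_1'\cup V\times V',\le_2\cup\le_2'\cup V'\times V)$. A letter $a$ also denotes the singleton text labeled $a$. Encodings $\Phi_\circ,\Phi_\bullet:\mathrm{NW}(\Delta)\to$ texts, defined recursively: for $nw=(a_1\cdots a_n,\nu)$, if $\nu=\emptyset$ then $\Phi_\circ(nw)=a_1\circ\cdots\circ a_n$ and $\Phi_\bullet(nw)=a_1\bullet\cdots\bullet a_n$; otherwise let $i$ be the least call position, $j$ its return position, $nw'=nw[i+1,j-1]$, $nw''=nw[j+1,n]$, and $\Phi_\circ(nw)=a_1\circ\cdots\circ a_{i-1}\circ(a_i\bullet\Phi_\bullet(nw')\bullet a_j)\circ\Phi_\circ(nw'')$, $\Phi_\bullet(nw)=a_1\bullet\cdots\bullet a_{i-1}\bullet(a_i\circ\Phi_\circ(nw')\circ a_j)\bullet\Phi_\bullet(nw'')$, where factors for empty intervals ($i+1=j$, $j=n$, $i=1$) are omitted. The domain of $\Phi_\circ(nw)$ and of $\Phi_\bullet(nw)$ is identified with $[n]$ so that $\le_1$ is the natural order of $[n]$ and position $i$ is labeled $a_i$. *)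

theory Defs
  imports Main
begin

text \<open>A nested word over the alphabet 'a is a pair (w, nu) with w a nonempty list
  (letters a_1 ... a_n, position k carries w ! (k-1)) and nu a nesting relation of width n.\<close>

definition nesting_relation :: "nat \<Rightarrow> (nat \<times> nat) set \<Rightarrow> bool" where
  "nesting_relation n nu \<longleftrightarrow>
     nu \<subseteq> {1..n} \<times> {1..n} \<and>
     (\<forall>i j. (i, j) \<in> nu \<longrightarrow> i < j) \<and>
     (\<forall>i j j'. (i, j) \<in> nu \<and> (i, j') \<in> nu \<longrightarrow> j = j') \<and>
     (\<forall>i i' j. (i, j) \<in> nu \<and> (i', j) \<in> nu \<longrightarrow> i = i') \<and>
     (\<forall>i j i' j'. (i, j) \<in> nu \<and> (i', j') \<in> nu \<and> i < i' \<longrightarrow> j < i' \<or> j' < j)"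

definition nested_word :: "'a list \<Rightarrow> (nat \<times> nat) set \<Rightarrow> bool" where
  "nested_word w nu \<longleftrightarrow> w \<noteq> [] \<and> nesting_relation (length w) nu"

definition nesting_depth :: "(nat \<times> nat) set \<Rightarrow> nat \<Rightarrow> nat" where
  "nesting_depth nu k = card {(k', l'). (k', l') \<in> nu \<and> k' \<le> k \<and> k \<le> l'}"

record 'a ntext =
  tdom :: "nat set"
  tlab :: "nat \<Rightarrow> 'a"
  tle1 :: "(nat \<times> nat) set"
  tle2 :: "(nat \<times> nat) set"

definition empty_text :: "'a ntext" where
  "empty_text = \<lparr>tdom = {}, tlab = (\<lambda>_. undefined), tle1 = {}, tle2 = {}\<rparr>"

definition tcirc :: "'a ntext \<Rightarrow> 'a ntext \<Rightarrow> 'a ntext" where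
  "tcirc t t' = \<lparr>tdom = tdom t \<union> tdom t',
     tlab = (\<lambda>x. if x \<in> tdom t then tlab t x else tlab t' x),
     tle1 = tle1 t \<union> tle1 t' \<union> tdom t \<times> tdom t',
     tle2 = tle2 t \<union> tle2 t' \<union> tdom t \<times> tdom t'\<rparr>"

definition tbullet :: "'a ntext \<Rightarrow> 'a ntext \<Rightarrow> 'a ntext" where
  "tbullet t t' = \<lparr>tdom = tdom t \<union> tdom t',
     tlab = (\<lambda>x. if x \<in> tdom t then tlab t x else tlab t' x),
     tle1 = tle1 t \<union> tle1 t' \<union> tdom t \<times> tdom t',
     tle2 = tle2 t \<union> tle2 t' \<union> tdom t' \<times> tdom t\<rparr>"

definition tprod :: "bool \<Rightarrow> 'a ntext \<Rightarrow> 'a ntext \<Rightarrow> 'a ntext" where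
  "tprod b = (if b then tcirc else tbullet)"

definition sing :: "'a list \<Rightarrow> nat \<Rightarrow> 'a ntext" where
  "sing w k = \<lparr>tdom = {k}, tlab = (\<lambda>_. w ! (k - 1)), tle1 = {(k, k)}, tle2 = {(k, k)}\<rparr>"

definition chain :: "bool \<Rightarrow> 'a list \<Rightarrow> nat \<Rightarrow> nat \<Rightarrow> 'a ntext" where
  "chain b w p q = foldl (\<lambda>t k. tprod b t (sing w k)) empty_text [p..<Suc q]"

text \<open>Encoding of the factor nw[p,q], with domain kept as the original positions
  {p..q}; fuel f bounds the recursion depth. Empty factors give the empty text,
  which is a unit for both products (this realises "omitted").\<close>
fun enc :: "nat \<Rightarrow> bool \<Rightarrow> 'a list \<Rightarrow> (nat \<times> nat) set \<Rightarrow> nat \<Rightarrow> nat \<Rightarrow> 'a ntext" where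
  "enc 0 b w nu p q = empty_text"
| "enc (Suc f) b w nu p q =
    (if q < p then empty_text
     else if {(k, l). (k, l) \<in> nu \<and> p \<le> k \<and> l \<le> q} = {} then chain b w p q
     else
       (let i = (LEAST k. \<exists>l. (k, l) \<in> nu \<and> p \<le> k \<and> l \<le> q);
            j = (THE l. (i, l) \<in> nu)
        in tprod b (chain b w p (i - 1))
             (tprod b
               (tprod (\<not> b) (tprod (\<not> b) (sing w i) (enc f (\<not> b) w nu (i + 1) (j - 1))) (sing w j))
               (enc f b w nu (j + 1) q))))"

definition Phi_circ :: "'a list \<Rightarrow> (nat \<times> nat) set \<Rightarrow> 'a ntext" where
  "Phi_circ w nu = enc (length w) True w nu 1 (length w)"

definition Phi_bullet :: "'a list \<Rightarrow> (nat \<times> nat) set \<Rightarrow> 'a ntext" where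
  "Phi_bullet w nu = enc (length w) False w nu 1 (length w)"

end

(* Between positions x < y of a factor, the encoding switches between the two products once
   for every arc enclosing both, so in Phi_circ the second order places x before y iff the
   number of enclosing arcs is even, and in Phi_bullet iff it is odd.  The arcs enclosing
   [i, j] form a chain, and they are exactly the arcs open at the call k of the innermost one,
   so their number is the nesting depth of k. *)

theory Submission
  imports Defs
begin

lemma nesting_relation_less:
  "nesting_relation n nu \<Longrightarrow> (k, l) \<in> nu \<Longrightarrow> k < l"
  unfolding nesting_relation_def by blast

lemma nesting_relation_bounds:
  "nesting_relation n nu \<Longrightarrow> (k, l) \<in> nu \<Longrightarrow> 1 \<le> k \<and> l \<le> n"
  unfolding nesting_relation_def by auto

lemma nesting_relation_return_unique:
  "nesting_relation n nu \<Longrightarrow> (k, l) \<in> nu \<Longrightarrow> (k, l') \<in> nu \<Longrightarrow> l = l'"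
  unfolding nesting_relation_def by blast

lemma nesting_relation_well_nested:
  "nesting_relation n nu \<Longrightarrow> (k, l) \<in> nu \<Longrightarrow> (k', l') \<in> nu \<Longrightarrow> k < k' \<Longrightarrow> l < k' \<or> l' < l"
  unfolding nesting_relation_def by blast

lemma nesting_relation_finite:
  "nesting_relation n nu \<Longrightarrow> finite nu"
  unfolding nesting_relation_def by (meson finite_SigmaI finite_atLeastAtMost finite_subset)

definition enclosing_arcs :: "(nat \<times> nat) set \<Rightarrow> nat \<Rightarrow> nat \<Rightarrow> nat \<Rightarrow> nat \<Rightarrow> (nat \<times> nat) set" where
  "enclosing_arcs nu p q x y = {(k, l) \<in> nu. p \<le> k \<and> k \<le> x \<and> y \<le> l \<and> l \<le> q}"

lemma finite_enclosing_arcs: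
  "nesting_relation n nu \<Longrightarrow> finite (enclosing_arcs nu p q x y)"
  unfolding enclosing_arcs_def
  by (rule finite_subset[OF _ nesting_relation_finite]) auto

lemma enclosing_arcs_left_outside: "x < p \<Longrightarrow> enclosing_arcs nu p q x y = {}"
  unfolding enclosing_arcs_def by auto

lemma enclosing_arcs_right_outside: "q < y \<Longrightarrow> enclosing_arcs nu p q x y = {}"
  unfolding enclosing_arcs_def by auto

lemma card_enclosing_arcs_first_arc:
  assumes N: "nesting_relation n nu"
    and ij: "(i, j) \<in> nu" "p \<le> i" "j \<le> q"
    and first: "\<And>k l. (k, l) \<in> nu \<Longrightarrow> p \<le> k \<Longrightarrow> l \<le> q \<Longrightarrow> i \<le> k"
  shows "card (enclosing_arcs nu p q x y)
    = (if i \<le> x \<and> y \<le> j then 1 else 0)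
      + card (enclosing_arcs nu (i + 1) (j - 1) x y) + card (enclosing_arcs nu (j + 1) q x y)"
proof -
  let ?I = "if i \<le> x \<and> y \<le> j then {(i, j)} else {}"
  have "i < j" using nesting_relation_less[OF N ij(1)] .
  have "enclosing_arcs nu p q x y
      = ?I \<union> enclosing_arcs nu (i + 1) (j - 1) x y \<union> enclosing_arcs nu (j + 1) q x y"
  proof (intro equalityI subsetI)
    fix a assume "a \<in> enclosing_arcs nu p q x y"
    then obtain k l where a: "a = (k, l)" "(k, l) \<in> nu" "p \<le> k" "k \<le> x" "y \<le> l" "l \<le> q"
      unfolding enclosing_arcs_def by blast
    consider "k = i" | "i < k" using first a by fastforce
    then show "a \<in> ?I \<union> enclosing_arcs nu (i + 1) (j - 1) x y \<union> enclosing_arcs nu (j + 1) q x y"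
    proof cases
      case 1
      then show ?thesis using a ij nesting_relation_return_unique[OF N] by auto
    next
      case 2
      then have "j < k \<or> l < j" using nesting_relation_well_nested[OF N ij(1) a(2)] by simp
      then show ?thesis using a 2 unfolding enclosing_arcs_def by auto
    qed
  qed (use ij \<open>i < j\<close> in \<open>auto simp: enclosing_arcs_def split: if_splits\<close>)
  moreover have "?I \<inter> enclosing_arcs nu (i + 1) (j - 1) x y = {}"
    unfolding enclosing_arcs_def by auto
  moreover have "(?I \<union> enclosing_arcs nu (i + 1) (j - 1) x y) \<inter> enclosing_arcs nu (j + 1) q x y = {}"
  proof -
    have "(k, l) \<notin> ?I \<union> enclosing_arcs nu (i + 1) (j - 1) x y"
      if "(k, l) \<in> enclosing_arcs nu (j + 1) q x y" for k l
    proof -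
      have "j < k" "k < l" using that nesting_relation_less[OF N] unfolding enclosing_arcs_def by auto
      then show ?thesis using \<open>i < j\<close> unfolding enclosing_arcs_def by auto
    qed
    then show ?thesis by fast
  qed
  ultimately show ?thesis
    by (simp add: card_Un_disjoint finite_enclosing_arcs[OF N])
qed

(* agree x y is only consulted for x < y: it says whether tle2 puts x before y. *)
definition text_on :: "nat set \<Rightarrow> (nat \<Rightarrow> nat \<Rightarrow> bool) \<Rightarrow> 'a ntext \<Rightarrow> bool" where
  "text_on D agree t \<longleftrightarrow> tdom t = D \<and>
     (\<forall>x y. (x, y) \<in> tle2 t \<longleftrightarrow>
        x \<in> D \<and> y \<in> D \<and> (x = y \<or> x < y \<and> agree x y \<or> y < x \<and> \<not> agree y x))"

lemma text_on_empty: "text_on {} agree empty_text"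
  by (simp add: text_on_def empty_text_def)

lemma text_on_sing: "text_on {k} agree (sing w k)"
  by (auto simp: text_on_def sing_def)

lemma tdom_tprod [simp]: "tdom (tprod b t t') = tdom t \<union> tdom t'"
  by (simp add: tprod_def tcirc_def tbullet_def)

lemma tle2_tprod:
  "(x, y) \<in> tle2 (tprod b t t') \<longleftrightarrow> (x, y) \<in> tle2 t \<or> (x, y) \<in> tle2 t' \<or>
     (if b then x \<in> tdom t \<and> y \<in> tdom t' else x \<in> tdom t' \<and> y \<in> tdom t)"
  by (auto simp: tprod_def tcirc_def tbullet_def)

lemma text_on_tprod:
  assumes t: "text_on D g t" and t': "text_on D' g' t'"
    and before: "\<And>x y. x \<in> D \<Longrightarrow> y \<in> D' \<Longrightarrow> x < y"
    and "\<And>x y. x \<in> D \<Longrightarrow> y \<in> D \<Longrightarrow> x < y \<Longrightarrow> h x y = g x y"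
    and "\<And>x y. x \<in> D' \<Longrightarrow> y \<in> D' \<Longrightarrow> x < y \<Longrightarrow> h x y = g' x y"
    and "\<And>x y. x \<in> D \<Longrightarrow> y \<in> D' \<Longrightarrow> h x y = b"
  shows "text_on (D \<union> D') h (tprod b t t')"
  unfolding text_on_def
proof (intro conjI allI)
  show "tdom (tprod b t t') = D \<union> D'" using t t' by (simp add: text_on_def)
  have t_le: "(x, y) \<in> tle2 t \<longleftrightarrow> x \<in> D \<and> y \<in> D \<and> (x = y \<or> x < y \<and> g x y \<or> y < x \<and> \<not> g y x)"
    and t'_le: "(x, y) \<in> tle2 t' \<longleftrightarrow> x \<in> D' \<and> y \<in> D' \<and> (x = y \<or> x < y \<and> g' x y \<or> y < x \<and> \<not> g' y x)"
    and "tdom t = D" "tdom t' = D'" for x y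
    using t t' unfolding text_on_def by blast+
  fix x y
  have disjoint: "z \<notin> D'" if "z \<in> D" for z using before[OF that] by blast
  consider "x \<in> D" "y \<in> D" | "x \<in> D'" "y \<in> D'" | "x \<in> D" "y \<in> D'" | "x \<in> D'" "y \<in> D"
    | "x \<notin> D \<union> D'" | "y \<notin> D \<union> D'" by blast
  then show "(x, y) \<in> tle2 (tprod b t t') \<longleftrightarrow> x \<in> D \<union> D' \<and> y \<in> D \<union> D' \<and>
      (x = y \<or> x < y \<and> h x y \<or> y < x \<and> \<not> h y x)"
    using assms(4-6) disjoint before[of x y] before[of y x]
    by cases (auto simp: tle2_tprod t_le t'_le \<open>tdom t = D\<close> \<open>tdom t' = D'\<close>)
qed

lemma chain_Suc: "p \<le> Suc q \<Longrightarrow> chain b w p (Suc q) = tprod b (chain b w p q) (sing w (Suc q))"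
  by (simp add: chain_def)

lemma text_on_chain: "text_on {p..q} (\<lambda>_ _. b) (chain b w p q)"
proof (induction q)
  case 0
  show ?case
  proof (cases p)
    case 0
    have "text_on ({} \<union> {0}) (\<lambda>_ _. b) (tprod b empty_text (sing w 0))"
      by (rule text_on_tprod[OF text_on_empty text_on_sing]) auto
    with 0 show ?thesis by (simp add: chain_def)
  qed (simp add: chain_def text_on_empty)
next
  case (Suc q)
  show ?case
  proof (cases "p \<le> Suc q")
    case True
    then have "{p..Suc q} = {p..q} \<union> {Suc q}" by auto
    moreover have "text_on ({p..q} \<union> {Suc q}) (\<lambda>_ _. b) (chain b w p (Suc q))"
      unfolding chain_Suc[OF True] by (rule text_on_tprod[OF Suc.IH text_on_sing]) auto
    ultimately show ?thesis by simp
  next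
    case False
    then show ?thesis by (simp add: chain_def text_on_empty)
  qed
qed

lemma text_on_tprod_call_return:
  assumes t: "text_on {i + 1..j - 1} g t" and "i < j"
    and "\<And>x y. i < x \<Longrightarrow> y < j \<Longrightarrow> x < y \<Longrightarrow> h x y = g x y"
    and "\<And>y. i < y \<Longrightarrow> y \<le> j \<Longrightarrow> h i y = c"
    and "\<And>x. i < x \<Longrightarrow> x < j \<Longrightarrow> h x j = c"
  shows "text_on {i..j} h (tprod c (tprod c (sing w i) t) (sing w j))"
proof -
  have "text_on ({i} \<union> {i + 1..j - 1}) h (tprod c (sing w i) t)"
    by (rule text_on_tprod[OF text_on_sing t]) (use assms in auto)
  then have "text_on ({i} \<union> {i + 1..j - 1} \<union> {j}) h (tprod c (tprod c (sing w i) t) (sing w j))"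
    by (rule text_on_tprod[OF _ text_on_sing]) (use assms in auto)
  moreover have "{i} \<union> {i + 1..j - 1} \<union> {j} = {i..j}" using \<open>i < j\<close> by auto
  ultimately show ?thesis by simp
qed

lemma enc_first_arc:
  assumes N: "nesting_relation n nu"
    and "p \<le> q" "{(k, l). (k, l) \<in> nu \<and> p \<le> k \<and> l \<le> q} \<noteq> {}"
  obtains i j where "(i, j) \<in> nu" "p \<le> i" "j \<le> q"
    and "\<And>k l. (k, l) \<in> nu \<Longrightarrow> p \<le> k \<Longrightarrow> l \<le> q \<Longrightarrow> i \<le> k"
    and "enc (Suc f) b w nu p q = tprod b (chain b w p (i - 1))
       (tprod b (tprod (\<not> b) (tprod (\<not> b) (sing w i) (enc f (\<not> b) w nu (i + 1) (j - 1))) (sing w j))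
          (enc f b w nu (j + 1) q))"
proof -
  define i where "i = (LEAST k. \<exists>l. (k, l) \<in> nu \<and> p \<le> k \<and> l \<le> q)"
  define j where "j = (THE l. (i, l) \<in> nu)"
  have "\<exists>l. (i, l) \<in> nu \<and> p \<le> i \<and> l \<le> q"
    unfolding i_def by (rule LeastI_ex) (use assms(3) in blast)
  then obtain l where l: "(i, l) \<in> nu" "p \<le> i" "l \<le> q" by blast
  have "j = l"
    unfolding j_def by (rule the_equality) (use l nesting_relation_return_unique[OF N] in blast)+
  with l have ij: "(i, j) \<in> nu" "p \<le> i" "j \<le> q" by simp_all
  have first: "i \<le> k" if "(k, l) \<in> nu" "p \<le> k" "l \<le> q" for k l
    unfolding i_def by (rule Least_le) (use that in blast)
  have "(q < p) = False" using assms(2) by simp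
  then have "enc (Suc f) b w nu p q = tprod b (chain b w p (i - 1))
       (tprod b (tprod (\<not> b) (tprod (\<not> b) (sing w i) (enc f (\<not> b) w nu (i + 1) (j - 1))) (sing w j))
          (enc f b w nu (j + 1) q))"
    using assms(3) by (simp only: enc.simps Let_def if_False flip: i_def j_def)
  from that[OF ij first this] show ?thesis .
qed

lemma text_on_enc:
  assumes N: "nesting_relation n nu"
  shows "q < p + f \<Longrightarrow>
    text_on {p..q} (\<lambda>x y. b \<longleftrightarrow> even (card (enclosing_arcs nu p q x y))) (enc f b w nu p q)"
proof (induction f arbitrary: b p q)
  case 0
  then show ?case by (simp add: text_on_empty)
next
  case (Suc f)
  let ?agree = "\<lambda>x y. b \<longleftrightarrow> even (card (enclosing_arcs nu p q x y))"
  consider "q < p" | "p \<le> q" "{(k, l). (k, l) \<in> nu \<and> p \<le> k \<and> l \<le> q} = {}"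
    | "p \<le> q" "{(k, l). (k, l) \<in> nu \<and> p \<le> k \<and> l \<le> q} \<noteq> {}"
    by linarith
  then show ?case
  proof cases
    case 1
    then show ?thesis by (simp add: text_on_empty)
  next
    case 2
    then have "enclosing_arcs nu p q x y = {}" for x y
      unfolding enclosing_arcs_def by auto
    with 2 show ?thesis by (simp add: text_on_chain)
  next
    case 3
    obtain i j where ij: "(i, j) \<in> nu" "p \<le> i" "j \<le> q"
      and first: "\<And>k l. (k, l) \<in> nu \<Longrightarrow> p \<le> k \<Longrightarrow> l \<le> q \<Longrightarrow> i \<le> k"
      and enc: "enc (Suc f) b w nu p q = tprod b (chain b w p (i - 1))
       (tprod b (tprod (\<not> b) (tprod (\<not> b) (sing w i) (enc f (\<not> b) w nu (i + 1) (j - 1))) (sing w j))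
          (enc f b w nu (j + 1) q))"
      using enc_first_arc[OF N 3, where f = f and b = b and w = w] by blast
    have "1 \<le> i" "i < j"
      using nesting_relation_bounds[OF N ij(1)] nesting_relation_less[OF N ij(1)] by simp_all
    note card_split = card_enclosing_arcs_first_arc[OF N ij first]
    note outside = enclosing_arcs_left_outside enclosing_arcs_right_outside
    have inner: "text_on {i..j} (\<lambda>x y. \<not> b \<longleftrightarrow> even (card (enclosing_arcs nu (i + 1) (j - 1) x y)))
        (tprod (\<not> b) (tprod (\<not> b) (sing w i) (enc f (\<not> b) w nu (i + 1) (j - 1))) (sing w j))"
      by (rule text_on_tprod_call_return[OF Suc.IH \<open>i < j\<close>])
        (use Suc.prems ij \<open>i < j\<close> in \<open>auto simp: outside\<close>)
    have "text_on ({i..j} \<union> {j + 1..q}) ?agree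
        (tprod b (tprod (\<not> b) (tprod (\<not> b) (sing w i) (enc f (\<not> b) w nu (i + 1) (j - 1))) (sing w j))
          (enc f b w nu (j + 1) q))"
      by (rule text_on_tprod[OF inner Suc.IH])
        (use Suc.prems ij \<open>i < j\<close> in \<open>auto simp: card_split outside\<close>)
    then have "text_on ({p..i - 1} \<union> ({i..j} \<union> {j + 1..q})) ?agree (enc (Suc f) b w nu p q)"
      unfolding enc
      by (rule text_on_tprod[OF text_on_chain])
        (use ij \<open>1 \<le> i\<close> \<open>i < j\<close> in \<open>auto simp: card_split outside\<close>)
    moreover have "{p..i - 1} \<union> ({i..j} \<union> {j + 1..q}) = {p..q}" using ij \<open>1 \<le> i\<close> \<open>i < j\<close> by auto
    ultimately show ?thesis by simp
  qed
qed

lemma nesting_depth_eq_card_enclosing_arcs: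
  "nesting_relation n nu \<Longrightarrow> nesting_depth nu k = card (enclosing_arcs nu 1 n k k)"
  unfolding nesting_depth_def enclosing_arcs_def
  by (rule arg_cong[where f = card]) (auto dest: nesting_relation_bounds)

lemma enclosing_arcs_innermost:
  assumes N: "nesting_relation n nu" and "i < j"
    and kl: "(k, l) \<in> enclosing_arcs nu p q i j"
    and innermost: "\<And>k' l'. (k', l') \<in> enclosing_arcs nu p q i j \<Longrightarrow> k' \<le> k"
  shows "enclosing_arcs nu p q k k = enclosing_arcs nu p q i j"
proof (intro equalityI subsetI; clarify)
  fix k' l' assume kl': "(k', l') \<in> enclosing_arcs nu p q k k"
  have "j \<le> l'"
  proof (cases "k' = k")
    case True
    then show ?thesis using kl kl' nesting_relation_return_unique[OF N] unfolding enclosing_arcs_def by auto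
  next
    case False
    then have "k' < k" using kl' unfolding enclosing_arcs_def by auto
    then have "l' < k \<or> l < l'"
      using nesting_relation_well_nested[OF N] kl kl' unfolding enclosing_arcs_def by blast
    then have "l < l'" using kl' unfolding enclosing_arcs_def by auto
    then show ?thesis using kl unfolding enclosing_arcs_def by auto
  qed
  then show "(k', l') \<in> enclosing_arcs nu p q i j" using kl kl' unfolding enclosing_arcs_def by auto
next
  fix k' l' assume kl': "(k', l') \<in> enclosing_arcs nu p q i j"
  then show "(k', l') \<in> enclosing_arcs nu p q k k"
    using innermost[OF kl'] kl \<open>i < j\<close> unfolding enclosing_arcs_def by auto
qed

lemma odd_card_enclosing_arcs_iff:
  assumes N: "nesting_relation n nu" and "i < j"
  shows "odd (card (enclosing_arcs nu 1 n i j)) \<longleftrightarrow>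
    (\<exists>k l. (k, l) \<in> nu \<and> 1 \<le> k \<and> k \<le> i \<and> j \<le> l \<and> l \<le> n
       \<and> odd (nesting_depth nu k)
       \<and> \<not> (\<exists>k' l'. (k', l') \<in> nu \<and> k < k' \<and> k' \<le> i \<and> j \<le> l' \<and> l' < l))"
    (is "?odd \<longleftrightarrow> ?innermost_odd")
proof
  let ?E = "enclosing_arcs nu 1 n i j"
  have fin: "finite ?E" using finite_enclosing_arcs[OF N] .
  assume ?odd
  then have "?E \<noteq> {}" by (intro notI) simp
  then have "Max (fst ` ?E) \<in> fst ` ?E" using fin by simp
  then obtain k l where kl: "(k, l) \<in> ?E" and "k = Max (fst ` ?E)" by force
  then have innermost: "\<And>k' l'. (k', l') \<in> ?E \<Longrightarrow> k' \<le> k"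
    using fin by (metis Max_ge finite_imageI fst_conv image_eqI)
  have "odd (nesting_depth nu k)"
    using \<open>?odd\<close> nesting_depth_eq_card_enclosing_arcs[OF N]
      enclosing_arcs_innermost[OF N \<open>i < j\<close> kl innermost]
    by simp
  moreover have "\<not> (\<exists>k' l'. (k', l') \<in> nu \<and> k < k' \<and> k' \<le> i \<and> j \<le> l' \<and> l' < l)"
    using innermost kl nesting_relation_bounds[OF N] unfolding enclosing_arcs_def by fastforce
  ultimately show ?innermost_odd using kl unfolding enclosing_arcs_def by blast
next
  assume ?innermost_odd
  then obtain k l where kl: "(k, l) \<in> enclosing_arcs nu 1 n i j" and odd: "odd (nesting_depth nu k)"
    and no_deeper: "\<not> (\<exists>k' l'. (k', l') \<in> nu \<and> k < k' \<and> k' \<le> i \<and> j \<le> l' \<and> l' < l)"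
    unfolding enclosing_arcs_def by blast
  have "k' \<le> k" if "(k', l') \<in> enclosing_arcs nu 1 n i j" for k' l'
  proof (rule ccontr)
    assume "\<not> k' \<le> k"
    then have "l' < l"
      using that kl nesting_relation_well_nested[OF N, of k l k' l'] \<open>i < j\<close>
      unfolding enclosing_arcs_def by auto
    then show False using that \<open>\<not> k' \<le> k\<close> no_deeper unfolding enclosing_arcs_def by auto
  qed
  then show ?odd
    using odd nesting_depth_eq_card_enclosing_arcs[OF N] enclosing_arcs_innermost[OF N \<open>i < j\<close> kl]
    by simp
qed

theorem lemma5p3:
  fixes w :: "'a list" and nu :: "(nat \<times> nat) set" and i j :: nat
  assumes "nested_word w nu"
    and "1 \<le> i" and "i < j" and "j \<le> length w"
  shows "((j, i) \<in> tle2 (Phi_circ w nu) \<longleftrightarrow> (i, j) \<in> tle2 (Phi_bullet w nu))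
       \<and> ((i, j) \<in> tle2 (Phi_bullet w nu) \<longleftrightarrow>
          (\<exists>k l. (k, l) \<in> nu \<and> 1 \<le> k \<and> k \<le> i \<and> j \<le> l \<and> l \<le> length w
             \<and> odd (nesting_depth nu k)
             \<and> \<not> (\<exists>k' l'. (k', l') \<in> nu \<and> k < k' \<and> k' \<le> i \<and> j \<le> l' \<and> l' < l)))"
proof -
  let ?n = "length w"
  have N: "nesting_relation ?n nu" using assms(1) unfolding nested_word_def by blast
  have "?n < 1 + ?n" by simp
  note Phi_order = text_on_enc[OF N this, unfolded text_on_def]
  have "(j, i) \<in> tle2 (Phi_circ w nu) \<longleftrightarrow> odd (card (enclosing_arcs nu 1 ?n i j))"
    using Phi_order[where b = True and w = w] assms(2-4) unfolding Phi_circ_def by auto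
  moreover have "(i, j) \<in> tle2 (Phi_bullet w nu) \<longleftrightarrow> odd (card (enclosing_arcs nu 1 ?n i j))"
    using Phi_order[where b = False and w = w] assms(2-4) unfolding Phi_bullet_def by auto
  ultimately show ?thesis using odd_card_enclosing_arcs_iff[OF N \<open>i < j\<close>] by simp
qed

end
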